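(* Let $\mathcal{M}=(\pi,x)$ be an incentive compatible and individually rational auction mechanism with a price-independent allocation policy, whose payments satisfy, for all $i$, $\mathbf{p}$, $\mathbf{c}_{-i}$, $c_i$, $$x_i(c_i,\mathbf{c}_{-i},\mathbf{p})=v_i(c_i,p_i)\pi_i(c_i,\mathbf{c}_{-i},\mathbf{p})-\lambda_i(p_i)\int_{c_i}^{\overline{c}_i}\pi_i(z,\mathbf{c}_{-i},\mathbf{p})\,dz.$$ For each $i$ let $\overline{p}_i\in\arg\max_{p'}\lambda_i(p')$. Then choosing display price $\overline{p}_i$ is a dominant strategy for advertiser $i$ (when costs are reported truthfully): for every $i$, every true cost $c_i$, every $\mathbf{c}_{-i}$, every $\mathbf{p}_{-i}$ and every $p_i'$, $u_i(c_i,(c_i,\mathbf{c}_{-i}),(\overline{p}_i,\mathbf{p}_{-i}),\mathcal{M})\ge u_i(c_i,(c_i,\mathbf{c}_{-i}),(p_i',\mathbf{p}_{-i}),\mathcal{M})$; in particular $(\overline{p}_1,\dots,\overline{p}_n)$ is an equilibrium price profile.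
   Context: There are advertisers $N=\{1,\dots,n\}$ competing for a single ad slot. Advertiser $i$ has a private product cost $c_i\in[\underline{c}_i,\overline{c}_i]$, sets a display price $p_i$, has conversion-rate function $\lambda_i:\mathbb{R}\to(0,1]$ and value $v_i(c_i,p_i)=(p_i-c_i)\lambda_i(p_i)$. An auction mechanism $\mathcal{M}=(\pi,x)$ maps cost reports and display prices $(\mathbf{c}',\mathbf{p})$ to allocations $\pi_i(\mathbf{c}',\mathbf{p})\in\{0,1\}$ (at most one winner) and payments $x_i(\mathbf{c}',\mathbf{p})$; utility $u_i(c_i,\mathbf{c}',\mathbf{p},\mathcal{M})=v_i(c_i,p_i)\pi_i(\mathbf{c}',\mathbf{p})-x_i(\mathbf{c}',\mathbf{p})$. IC: truthful cost reporting maximizes $u_i$ for all $i$, true costs, prices and others' reports. IR: truthful cost reporting yields $u_i\ge0$. The allocation policy is price-independent (PI) if $\pi_i(\mathbf{c}',\mathbf{p}^1)=\pi_i(\mathbf{c}',\mathbf{p}^2)$ for all $i$, all $\mathbf{c}'$ and all price profiles $\mathbf{p}^1,\mathbf{p}^2$. *)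

theory Defs
  imports "HOL-Analysis.Analysis"
begin

(* Advertisers are the elements of a finite index type 'i (N = UNIV, n = CARD('i)).
   Cost profiles and price profiles are functions 'i => real. *)

definition cost_profile :: "('i \<Rightarrow> real) \<Rightarrow> ('i \<Rightarrow> real) \<Rightarrow> ('i \<Rightarrow> real) \<Rightarrow> bool" where
  "cost_profile clo chi c \<longleftrightarrow> (\<forall>j. c j \<in> {clo j..chi j})"

definition adv_value :: "('i \<Rightarrow> real \<Rightarrow> real) \<Rightarrow> 'i \<Rightarrow> real \<Rightarrow> real \<Rightarrow> real" where
  "adv_value lam i ci q = (q - ci) * lam i q"

definition utility ::
  "('i \<Rightarrow> real \<Rightarrow> real) \<Rightarrow> (('i \<Rightarrow> real) \<Rightarrow> ('i \<Rightarrow> real) \<Rightarrow> 'i \<Rightarrow> real)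
   \<Rightarrow> (('i \<Rightarrow> real) \<Rightarrow> ('i \<Rightarrow> real) \<Rightarrow> 'i \<Rightarrow> real)
   \<Rightarrow> 'i \<Rightarrow> real \<Rightarrow> ('i \<Rightarrow> real) \<Rightarrow> ('i \<Rightarrow> real) \<Rightarrow> real" where
  "utility lam alloc pay i ci c' p = adv_value lam i ci (p i) * alloc c' p i - pay c' p i"

definition valid_alloc :: "('i \<Rightarrow> real) \<Rightarrow> ('i \<Rightarrow> real) \<Rightarrow> (('i \<Rightarrow> real) \<Rightarrow> ('i \<Rightarrow> real) \<Rightarrow> 'i \<Rightarrow> real) \<Rightarrow> bool" where
  "valid_alloc clo chi alloc \<longleftrightarrow>
     (\<forall>c p. cost_profile clo chi c \<longrightarrow>
        (\<forall>i. alloc c p i \<in> {0, 1}) \<and> card {i. alloc c p i = 1} \<le> 1)"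

definition incentive_compatible where
  "incentive_compatible clo chi lam alloc pay \<longleftrightarrow>
     (\<forall>i c p ci'. cost_profile clo chi c \<longrightarrow> ci' \<in> {clo i..chi i} \<longrightarrow>
        utility lam alloc pay i (c i) (c(i := ci')) p \<le> utility lam alloc pay i (c i) c p)"

definition individually_rational where
  "individually_rational clo chi lam alloc pay \<longleftrightarrow>
     (\<forall>i c p. cost_profile clo chi c \<longrightarrow> 0 \<le> utility lam alloc pay i (c i) c p)"

definition price_independent where
  "price_independent clo chi alloc \<longleftrightarrow>
     (\<forall>c p1 p2 i. cost_profile clo chi c \<longrightarrow> alloc c p1 i = alloc c p2 i)"

end

theory Submission
  imports Defs
begin

(* Under this payment rule the truthful utility of advertiser i is lambda_i(p_i) times
   the integral of pi_i over the costs above c_i. Price independence makes that integral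
   independent of p_i, and individual rationality makes it nonnegative, so the utility
   is maximised by any maximiser of lambda_i. *)

lemma cost_profile_update:
  assumes "cost_profile clo chi c" and "z \<in> {clo i..chi i}"
  shows "cost_profile clo chi (c(i := z))"
  using assms unfolding cost_profile_def by auto

lemma utility_eq_lam_mult_integral:
  assumes "pay c p i = adv_value lam i (c i) (p i) * alloc c p i
                       - lam i (p i) * integral {c i..chi i} (\<lambda>z. alloc (c(i := z)) p i)"
  shows "utility lam alloc pay i (c i) c p
           = lam i (p i) * integral {c i..chi i} (\<lambda>z. alloc (c(i := z)) p i)"
  using assms by (simp add: utility_def)

lemma integral_alloc_price_independent:
  assumes PI: "price_independent clo chi alloc"
    and cp: "cost_profile clo chi c"
  shows "integral {c i..chi i} (\<lambda>z. alloc (c(i := z)) p i)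
           = integral {c i..chi i} (\<lambda>z. alloc (c(i := z)) p' i)"
proof (rule integral_cong)
  fix z
  assume "z \<in> {c i..chi i}"
  moreover have "clo i \<le> c i"
    using cp by (simp add: cost_profile_def)
  ultimately have "cost_profile clo chi (c(i := z))"
    using cost_profile_update[OF cp] by simp
  then show "alloc (c(i := z)) p i = alloc (c(i := z)) p' i"
    using PI by (simp add: price_independent_def)
qed

theorem proposition2:
  fixes clo chi :: "'i::finite \<Rightarrow> real"
    and lam :: "'i \<Rightarrow> real \<Rightarrow> real"
    and alloc pay :: "('i \<Rightarrow> real) \<Rightarrow> ('i \<Rightarrow> real) \<Rightarrow> 'i \<Rightarrow> real"
    and pbar :: "'i \<Rightarrow> real"
  assumes bounds: "\<And>i. clo i \<le> chi i"
    and lam_range: "\<And>i q. 0 < lam i q \<and> lam i q \<le> 1"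
    and alloc_ok: "valid_alloc clo chi alloc"
    and IC: "incentive_compatible clo chi lam alloc pay"
    and IR: "individually_rational clo chi lam alloc pay"
    and PI: "price_independent clo chi alloc"
    and payment: "\<And>i c p. cost_profile clo chi c \<Longrightarrow>
        pay c p i = adv_value lam i (c i) (p i) * alloc c p i
                    - lam i (p i) * integral {c i..chi i} (\<lambda>z. alloc (c(i := z)) p i)"
    and pbar_max: "\<And>i q. lam i q \<le> lam i (pbar i)"
  shows "\<forall>i c p q. cost_profile clo chi c \<longrightarrow>
           utility lam alloc pay i (c i) c (p(i := q))
             \<le> utility lam alloc pay i (c i) c (p(i := pbar i))"
proof (intro allI impI)
  fix i c p q
  assume cp: "cost_profile clo chi c"
  define I where "I = integral {c i..chi i} (\<lambda>z. alloc (c(i := z)) p i)"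
  have utility_eq: "utility lam alloc pay i (c i) c (p(i := r)) = lam i r * I" for r
  proof -
    have "utility lam alloc pay i (c i) c (p(i := r))
            = lam i ((p(i := r)) i) * integral {c i..chi i} (\<lambda>z. alloc (c(i := z)) (p(i := r)) i)"
      by (rule utility_eq_lam_mult_integral, rule payment[OF cp])
    also have "\<dots> = lam i r * I"
      using integral_alloc_price_independent[OF PI cp] by (simp add: I_def)
    finally show ?thesis .
  qed
  have "0 \<le> lam i q * I"
    using IR cp unfolding individually_rational_def utility_eq[symmetric] by blast
  then have "0 \<le> I"
    using lam_range[of i q] by (simp add: zero_le_mult_iff)
  then show "utility lam alloc pay i (c i) c (p(i := q))
               \<le> utility lam alloc pay i (c i) c (p(i := pbar i))"
    using pbar_max[of i q] by (simp add: utility_eq mult_right_mono)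
qed

end
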